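(* Under the standing assumptions below, there exists a unique constant $\eta\in(0,1)$ such that for every $\mathbf v\in\mathbb R_0^{N}$, $$\eta\, \mathrm{d}I_1(\mathbf v)+(1-\eta)\,\mathrm{d}I_2(\mathbf v)=0 .$$
   Context: Let $\mathcal X=\{1,\dots,N\}$ and $\mathcal Y$ be finite alphabets and $W_1,W_2$ transition probability matrices from $\mathcal X$ to $\mathcal Y$. For a distribution $P$ on $\mathcal X$ let $PW_k(y)=\sum_x P(x)W_k(y|x)$, $I_k(P)=\sum_x P(x)D(W_k(\cdot|x)\|PW_k)$ (mutual information, natural logarithms), $\imath_{P,W_k}(x;y)=\log\frac{W_k(y|x)}{PW_k(y)}$, and $V_k(P)=\sum_x P(x)\,\mathrm{Var}[\imath_{P,W_k}(x;Y_k)]$ where $Y_k\sim W_k(\cdot|x)$. Let $C=\max_P\min_{k\in\{1,2\}}I_k(P)$ and $C_k=\max_P I_k(P)$. Standing assumptions: the maximizer $P^*$ of $P\mapsto\min_k I_k(P)$ is unique; $P^*(x)>0$ for all $x$; $V_k(P^* )>0$ for $k=1,2$; $C_k>C$ for $k=1,2$. Let $P^*_{Y_k}=P^*W_k$, let $\mathbb R_0^N$ be the set of vectors in $\mathbb R^N$ whose entries sum to zero, and for $\mathbf v\in\mathbb R_0^N$ define $\mathrm{d}I_k(\mathbf v)=\sum_{x\in\mathcal X}v_x D(W_k(\cdot|x)\|P^*_{Y_k})$ (the directional derivative of $I_k$ at $P^*$ along $\mathbf v$). *)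

theory Defs
  imports Complex_Main
begin

text \<open>Input alphabet: finite type 'a (plays the role of {1..N});
  output alphabet: finite type 'b. Distributions are functions to real,
  channels are row-stochastic matrices W x y = W(y|x). Natural logs.\<close>

definition is_dist :: "('a::finite \<Rightarrow> real) \<Rightarrow> bool" where
  "is_dist P \<longleftrightarrow> (\<forall>x. 0 \<le> P x) \<and> (\<Sum>x\<in>UNIV. P x) = 1"

definition is_channel :: "('a::finite \<Rightarrow> 'b::finite \<Rightarrow> real) \<Rightarrow> bool" where
  "is_channel W \<longleftrightarrow> (\<forall>x. is_dist (W x))"

definition out_dist :: "('a::finite \<Rightarrow> real) \<Rightarrow> ('a \<Rightarrow> 'b::finite \<Rightarrow> real) \<Rightarrow> 'b \<Rightarrow> real" where
  "out_dist P W y = (\<Sum>x\<in>UNIV. P x * W x y)"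

definition kl_div :: "('b::finite \<Rightarrow> real) \<Rightarrow> ('b \<Rightarrow> real) \<Rightarrow> real" where
  "kl_div p q = (\<Sum>y\<in>{y. 0 < p y}. p y * ln (p y / q y))"

definition mutual_info :: "('a::finite \<Rightarrow> real) \<Rightarrow> ('a \<Rightarrow> 'b::finite \<Rightarrow> real) \<Rightarrow> real" where
  "mutual_info P W = (\<Sum>x\<in>UNIV. P x * kl_div (W x) (out_dist P W))"

definition info_density :: "('a::finite \<Rightarrow> real) \<Rightarrow> ('a \<Rightarrow> 'b::finite \<Rightarrow> real) \<Rightarrow> 'a \<Rightarrow> 'b \<Rightarrow> real" where
  "info_density P W x y = ln (W x y / out_dist P W y)"

definition info_var_cond :: "('a::finite \<Rightarrow> real) \<Rightarrow> ('a \<Rightarrow> 'b::finite \<Rightarrow> real) \<Rightarrow> 'a \<Rightarrow> real" where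
  "info_var_cond P W x =
     (let m = (\<Sum>y\<in>{y. 0 < W x y}. W x y * info_density P W x y)
      in (\<Sum>y\<in>{y. 0 < W x y}. W x y * (info_density P W x y - m)\<^sup>2))"

definition dispersion :: "('a::finite \<Rightarrow> real) \<Rightarrow> ('a \<Rightarrow> 'b::finite \<Rightarrow> real) \<Rightarrow> real" where
  "dispersion P W = (\<Sum>x\<in>UNIV. P x * info_var_cond P W x)"

definition compound_capacity :: "('a::finite \<Rightarrow> 'b::finite \<Rightarrow> real) \<Rightarrow> ('a \<Rightarrow> 'b \<Rightarrow> real) \<Rightarrow> real" where
  "compound_capacity W1 W2 = (SUP P\<in>{P. is_dist P}. min (mutual_info P W1) (mutual_info P W2))"

definition capacity :: "('a::finite \<Rightarrow> 'b::finite \<Rightarrow> real) \<Rightarrow> real" where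
  "capacity W = (SUP P\<in>{P. is_dist P}. mutual_info P W)"

text \<open>Directional derivative dI_k(v) at P*.\<close>
definition dI :: "('a::finite \<Rightarrow> real) \<Rightarrow> ('a \<Rightarrow> 'b::finite \<Rightarrow> real) \<Rightarrow> ('a \<Rightarrow> real) \<Rightarrow> real" where
  "dI Pstar W v = (\<Sum>x\<in>UNIV. v x * kl_div (W x) (out_dist Pstar W))"

end

theory Submission imports Defs begin

text \<open>
  Since \<open>dI P W Q - I(Q) = D(QW \<parallel> PW) \<ge> 0\<close>, the
  mutual information is dominated by the linear function \<open>Q \<mapsto> dI P W Q\<close>; and the
  \<open>\<chi>\<^sup>2\<close>-bound on the same divergence gives \<open>I(P + t v) \<ge> I(P) + t dI P W v - K t\<^sup>2\<close>, so
  \<open>dI P W v\<close> is a lower directional derivative of \<open>I\<close> at \<open>P\<close>.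

  At the maximin point \<open>P*\<close> the two informations agree: if \<open>I\<^sub>2(P*) < I\<^sub>1(P*)\<close>, no
  sum-zero direction can increase \<open>I\<^sub>2\<close>, so \<open>dI\<^sub>2\<close> vanishes on \<open>\<real>\<^sub>0\<^sup>N\<close>, i.e. all
  \<open>D(W\<^sub>2(\<cdot>|x) \<parallel> P*W\<^sub>2)\<close> are equal, and the linear upper bound forces \<open>C\<^sub>2 = I\<^sub>2(P*) = C\<close>.
  The same reasoning shows that neither \<open>dI\<^sub>k\<close> vanishes on \<open>\<real>\<^sub>0\<^sup>N\<close>, and that no direction
  increases both. Two nonzero linear functionals without a common ascent direction are
  negatively proportional, which is the claim.
\<close>

lemma out_dist_nonneg:
  assumes "is_channel W" "\<forall>x. 0 \<le> Q x"
  shows "0 \<le> out_dist Q W y"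
  using assms unfolding out_dist_def is_channel_def is_dist_def
  by (intro sum_nonneg) simp

lemma out_dist_ge:
  assumes "is_channel W" "\<forall>x. 0 \<le> Q x"
  shows "Q x * W x y \<le> out_dist Q W y"
  unfolding out_dist_def
  by (rule member_le_sum[of x UNIV "\<lambda>x. Q x * W x y"])
     (use assms in \<open>auto simp: is_channel_def is_dist_def\<close>)

lemma sum_out_dist:
  assumes "is_channel W" "is_dist Q"
  shows "(\<Sum>y\<in>UNIV. out_dist Q W y) = 1"
proof -
  have "(\<Sum>y\<in>UNIV. out_dist Q W y) = (\<Sum>x\<in>UNIV. Q x * (\<Sum>y\<in>UNIV. W x y))"
    unfolding out_dist_def by (subst sum.swap) (simp add: sum_distrib_left)
  also have "\<dots> = 1" using assms by (simp add: is_channel_def is_dist_def)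
  finally show ?thesis .
qed

lemma out_dist_eq_0_transfer:
  assumes ch: "is_channel W" and Ppos: "\<forall>x. 0 < P x" and z: "out_dist P W y = 0"
  shows "out_dist Q W y = 0"
proof -
  have "\<forall>x\<in>UNIV. 0 \<le> P x * W x y"
    using ch Ppos by (auto simp: is_channel_def is_dist_def less_imp_le)
  then have "\<forall>x. P x * W x y = 0"
    using z unfolding out_dist_def by (simp add: sum_nonneg_eq_0_iff)
  then have "\<forall>x. W x y = 0" using Ppos by (metis less_irrefl mult_eq_0_iff)
  then show ?thesis by (simp add: out_dist_def)
qed

lemma dI_lincomb: "dI P W (\<lambda>x. a * v x + b * w x) = a * dI P W v + b * dI P W w"
  unfolding dI_def by (simp add: algebra_simps sum.distrib sum_distrib_left)

lemma mutual_info_eq_dI: "mutual_info P W = dI P W P"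
  unfolding mutual_info_def dI_def ..

subsection \<open>Bounds on a relative-entropy term\<close>

lemma mult_ln_div_ge:
  fixes p q :: real
  assumes "0 \<le> q" "0 \<le> p" "p = 0 \<Longrightarrow> q = 0"
  shows "q - p \<le> q * ln (q / p)"
proof (cases "q = 0")
  case False
  then have q: "0 < q" and p: "0 < p" using assms by (auto simp: less_le)
  have "ln (p / q) \<le> p / q - 1" using q p by (intro ln_le_minus_one) simp
  moreover have "ln (p / q) = - ln (q / p)" using q p by (simp add: ln_div)
  ultimately have "q * (1 - p / q) \<le> q * ln (q / p)" using q by (intro mult_left_mono) auto
  moreover have "q * (1 - p / q) = q - p" using q by (simp add: field_simps)
  ultimately show ?thesis by simp
qed (use assms in simp)

lemma mult_ln_div_le:
  fixes p q :: real
  assumes "0 \<le> q" "0 \<le> p" "p = 0 \<Longrightarrow> q = 0"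
  shows "q * ln (q / p) \<le> (q - p)\<^sup>2 / p + (q - p)"
proof (cases "q = 0")
  case False
  then have q: "0 < q" and p: "0 < p" using assms by (auto simp: less_le)
  have "q * ln (q / p) \<le> q * (q / p - 1)"
    using q p by (intro mult_left_mono ln_le_minus_one) auto
  also have "\<dots> = (q - p)\<^sup>2 / p + (q - p)" using p by (simp add: field_simps power2_eq_square)
  finally show ?thesis .
qed (use assms in \<open>simp add: power2_eq_square\<close>)

subsection \<open>The golden formula and its consequences\<close>

lemma dI_minus_mutual_info:
  assumes ch: "is_channel W" and Ppos: "\<forall>x. 0 < P x" and Q: "is_dist Q"
  shows "dI P W Q - mutual_info Q W
       = (\<Sum>y\<in>UNIV. out_dist Q W y * ln (out_dist Q W y / out_dist P W y))"
proof -
  define p where "p = out_dist P W"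
  define q where "q = out_dist Q W"
  have Wnn: "\<And>x y. 0 \<le> W x y" using ch by (auto simp: is_channel_def is_dist_def)
  have Qnn: "\<forall>x. 0 \<le> Q x" using Q by (auto simp: is_dist_def)
  have Pnn: "\<forall>x. 0 \<le> P x" using Ppos by (auto simp: less_imp_le)
  have per_input: "Q x * kl_div (W x) p - Q x * kl_div (W x) q
      = Q x * (\<Sum>y\<in>UNIV. W x y * ln (q y / p y))" for x
  proof (cases "Q x = 0")
    case False
    then have Qx: "0 < Q x" using Qnn by (simp add: less_le)
    have "kl_div (W x) p - kl_div (W x) q = (\<Sum>y\<in>{y. 0 < W x y}. W x y * ln (q y / p y))"
      unfolding kl_div_def sum_subtractf[symmetric]
    proof (rule sum.cong[OF refl])
      fix y assume "y \<in> {y. 0 < W x y}"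
      then have w: "0 < W x y" by simp
      have "0 < P x * W x y" using Ppos w by simp
      also have "\<dots> \<le> p y" unfolding p_def by (rule out_dist_ge[OF ch Pnn])
      finally have "0 < p y" .
      moreover have "0 < q y"
        using Qx w out_dist_ge[OF ch Qnn, of x y] unfolding q_def by (smt (verit) mult_pos_pos)
      ultimately show "W x y * ln (W x y / p y) - W x y * ln (W x y / q y) = W x y * ln (q y / p y)"
        using w by (simp add: ln_div algebra_simps)
    qed
    also have "\<dots> = (\<Sum>y\<in>UNIV. W x y * ln (q y / p y))"
      by (rule sum.mono_neutral_left) (use Wnn in \<open>auto simp: not_less le_less\<close>)
    finally show ?thesis by (simp add: right_diff_distrib[symmetric])
  qed simp
  have "dI P W Q - mutual_info Q W = (\<Sum>x\<in>UNIV. Q x * (\<Sum>y\<in>UNIV. W x y * ln (q y / p y)))"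
    unfolding mutual_info_def dI_def p_def[symmetric] q_def[symmetric] sum_subtractf[symmetric]
    using per_input by simp
  also have "\<dots> = (\<Sum>y\<in>UNIV. \<Sum>x\<in>UNIV. Q x * W x y * ln (q y / p y))"
    by (subst sum.swap) (simp add: sum_distrib_left mult.assoc)
  also have "\<dots> = (\<Sum>y\<in>UNIV. q y * ln (q y / p y))"
    unfolding q_def out_dist_def by (simp add: sum_distrib_right)
  finally show ?thesis unfolding p_def q_def .
qed

lemma mutual_info_le_dI:
  assumes ch: "is_channel W" and P: "is_dist P" and Ppos: "\<forall>x. 0 < P x" and Q: "is_dist Q"
  shows "mutual_info Q W \<le> dI P W Q"
proof -
  have Qnn: "\<forall>x. 0 \<le> Q x" using Q by (auto simp: is_dist_def)
  have Pnn: "\<forall>x. 0 \<le> P x" using Ppos by (auto simp: less_imp_le)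
  have "0 = (\<Sum>y\<in>UNIV. out_dist Q W y - out_dist P W y)"
    using sum_out_dist[OF ch Q] sum_out_dist[OF ch P] by (simp add: sum_subtractf)
  also have "\<dots> \<le> (\<Sum>y\<in>UNIV. out_dist Q W y * ln (out_dist Q W y / out_dist P W y))"
    by (intro sum_mono mult_ln_div_ge out_dist_nonneg[OF ch] Qnn Pnn)
       (rule out_dist_eq_0_transfer[OF ch Ppos])
  finally show ?thesis using dI_minus_mutual_info[OF ch Ppos Q] by simp
qed

lemma mutual_info_perturb_lower_bound:
  assumes ch: "is_channel W" and P: "is_dist P" and Ppos: "\<forall>x. 0 < P x"
    and v: "(\<Sum>x\<in>UNIV. v x) = 0"
  obtains K where "\<And>t. is_dist (\<lambda>x. P x + t * v x) \<Longrightarrow>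
    mutual_info P W + t * dI P W v - t\<^sup>2 * K \<le> mutual_info (\<lambda>x. P x + t * v x) W"
proof
  define K where "K = (\<Sum>y\<in>UNIV. (\<Sum>x\<in>UNIV. v x * W x y)\<^sup>2 / out_dist P W y)"
  fix t :: real
  define Q where "Q = (\<lambda>x. P x + t * v x)"
  assume "is_dist (\<lambda>x. P x + t * v x)"
  then have Q: "is_dist Q" by (simp add: Q_def)
  have Qnn: "\<forall>x. 0 \<le> Q x" using Q by (auto simp: is_dist_def)
  have Pnn: "\<forall>x. 0 \<le> P x" using Ppos by (auto simp: less_imp_le)
  define d where "d y = out_dist Q W y - out_dist P W y" for y
  have d: "d y = t * (\<Sum>x\<in>UNIV. v x * W x y)" for y
    unfolding d_def out_dist_def Q_def
    by (simp add: sum_subtractf[symmetric] sum_distrib_left algebra_simps)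
  have "(\<Sum>y\<in>UNIV. out_dist Q W y * ln (out_dist Q W y / out_dist P W y))
      \<le> (\<Sum>y\<in>UNIV. (d y)\<^sup>2 / out_dist P W y + d y)"
    unfolding d_def
    by (intro sum_mono mult_ln_div_le out_dist_nonneg[OF ch] Qnn Pnn)
       (rule out_dist_eq_0_transfer[OF ch Ppos])
  also have "\<dots> = (\<Sum>y\<in>UNIV. (d y)\<^sup>2 / out_dist P W y) + (\<Sum>y\<in>UNIV. d y)"
    by (rule sum.distrib)
  also have "(\<Sum>y\<in>UNIV. d y) = 0"
    using sum_out_dist[OF ch Q] sum_out_dist[OF ch P] by (simp add: d_def sum_subtractf)
  also have "(\<Sum>y\<in>UNIV. (d y)\<^sup>2 / out_dist P W y) = t\<^sup>2 * K"
    unfolding K_def d power_mult_distrib by (simp add: sum_distrib_left)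
  finally have "dI P W Q - mutual_info Q W \<le> t\<^sup>2 * K"
    using dI_minus_mutual_info[OF ch Ppos Q] by simp
  moreover have "dI P W Q = mutual_info P W + t * dI P W v"
    using dI_lincomb[of P W 1 P t v] by (simp add: Q_def mutual_info_eq_dI)
  ultimately show "mutual_info P W + t * dI P W v - t\<^sup>2 * K \<le> mutual_info (\<lambda>x. P x + t * v x) W"
    by (simp add: Q_def)
qed

subsection \<open>Local behaviour along sum-zero directions\<close>

lemma eventually_perturb_is_dist:
  assumes P: "is_dist P" and Ppos: "\<forall>x. 0 < P x" and v: "(\<Sum>x\<in>UNIV. v x) = 0"
  shows "eventually (\<lambda>t. is_dist (\<lambda>x. P x + t * v x)) (at_right (0::real))"
proof -
  have "eventually (\<lambda>t. \<forall>x. 0 < P x + t * v x) (at_right (0::real))"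
  proof (rule eventually_all_finite)
    fix x
    have "((\<lambda>t. P x + t * v x) \<longlongrightarrow> P x + 0 * v x) (at_right (0::real))"
      by (intro tendsto_intros)
    then show "eventually (\<lambda>t. 0 < P x + t * v x) (at_right (0::real))"
      using Ppos by (intro order_tendstoD(1)) auto
  qed
  moreover have "(\<Sum>x\<in>UNIV. P x + t * v x) = 1" for t
    using P v by (simp add: sum.distrib is_dist_def sum_distrib_left[symmetric])
  ultimately show ?thesis
    by (auto simp: is_dist_def less_imp_le elim: eventually_mono)
qed

lemma eventually_mutual_info_perturb_gt:
  assumes ch: "is_channel W" and P: "is_dist P" and Ppos: "\<forall>x. 0 < P x"
    and v: "(\<Sum>x\<in>UNIV. v x) = 0"
    and c: "c < mutual_info P W \<or> c = mutual_info P W \<and> 0 < dI P W v"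
  shows "eventually (\<lambda>t. is_dist (\<lambda>x. P x + t * v x) \<and> c < mutual_info (\<lambda>x. P x + t * v x) W)
           (at_right (0::real))"
proof -
  obtain K where K: "\<And>t. is_dist (\<lambda>x. P x + t * v x) \<Longrightarrow>
      mutual_info P W + t * dI P W v - t\<^sup>2 * K \<le> mutual_info (\<lambda>x. P x + t * v x) W"
    using mutual_info_perturb_lower_bound[OF ch P Ppos v] by blast
  have "eventually (\<lambda>t. c < mutual_info P W + t * dI P W v - t\<^sup>2 * K) (at_right (0::real))"
    using c
  proof
    assume "c < mutual_info P W"
    moreover have "((\<lambda>t. mutual_info P W + t * dI P W v - t\<^sup>2 * K) \<longlongrightarrow>
        mutual_info P W + 0 * dI P W v - 0\<^sup>2 * K) (at_right (0::real))"
      by (intro tendsto_intros)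
    ultimately show ?thesis by (intro order_tendstoD(1)) auto
  next
    assume c: "c = mutual_info P W \<and> 0 < dI P W v"
    have "((\<lambda>t. dI P W v - t * K) \<longlongrightarrow> dI P W v - 0 * K) (at_right (0::real))"
      by (intro tendsto_intros)
    then have "eventually (\<lambda>t. 0 < dI P W v - t * K) (at_right (0::real))"
      using c by (intro order_tendstoD(1)) auto
    with eventually_at_right_less show ?thesis
    proof eventually_elim
      case (elim t)
      then have "0 < t * (dI P W v - t * K)" by simp
      then show ?case using c by (simp add: algebra_simps power2_eq_square)
    qed
  qed
  with eventually_perturb_is_dist[OF P Ppos v] show ?thesis
    by eventually_elim (use K in fastforce)
qed

lemma capacity_le_of_dI_vanishes:
  assumes ch: "is_channel W" and P: "is_dist P" and Ppos: "\<forall>x. 0 < P x"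
    and dI0: "\<forall>v. (\<Sum>x\<in>UNIV. v x) = 0 \<longrightarrow> dI P W v = 0"
  shows "capacity W \<le> mutual_info P W"
proof -
  define a where "a x = kl_div (W x) (out_dist P W)" for x
  fix x0 :: 'a
  have const: "a x = a x0" for x
  proof -
    define v :: "'a \<Rightarrow> real" where "v z = of_bool (z = x) - of_bool (z = x0)" for z
    have "(\<Sum>z\<in>UNIV. v z) = 0" by (simp add: v_def sum_subtractf)
    moreover have "dI P W v = a x - a x0"
      by (simp add: dI_def a_def[symmetric] v_def left_diff_distrib sum_subtractf if_distrib)
    ultimately show ?thesis using dI0 by simp
  qed
  have dI_const: "dI P W Q = a x0" if "is_dist Q" for Q
  proof -
    have "dI P W Q = (\<Sum>x\<in>UNIV. Q x * a x0)"
      unfolding dI_def a_def[symmetric] by (intro sum.cong refl) (subst const, rule refl)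
    then show ?thesis using that by (simp add: is_dist_def sum_distrib_right[symmetric])
  qed
  show ?thesis unfolding capacity_def
  proof (rule cSUP_least)
    show "{Q. is_dist (Q::'a \<Rightarrow> real)} \<noteq> {}" using P by auto
    fix Q :: "'a \<Rightarrow> real" assume "Q \<in> {P. is_dist P}"
    then have Q: "is_dist Q" by simp
    have "mutual_info Q W \<le> dI P W Q" by (rule mutual_info_le_dI[OF ch P Ppos Q])
    then show "mutual_info Q W \<le> mutual_info P W"
      using dI_const[OF Q] dI_const[OF P] by (simp add: mutual_info_eq_dI)
  qed
qed

subsection \<open>Maximin points\<close>

lemma maximin_no_common_ascent:
  assumes Pmax: "\<forall>Q. is_dist Q \<longrightarrow>
        min (mutual_info Q W1) (mutual_info Q W2) \<le> min (mutual_info P W1) (mutual_info P W2)"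
    and c: "min (mutual_info P W1) (mutual_info P W2) \<le> c"
    and ev1: "eventually (\<lambda>t. is_dist (\<lambda>x. P x + t * v x) \<and> c < mutual_info (\<lambda>x. P x + t * v x) W1)
                (at_right (0::real))"
    and ev2: "eventually (\<lambda>t. is_dist (\<lambda>x. P x + t * v x) \<and> c < mutual_info (\<lambda>x. P x + t * v x) W2)
                (at_right (0::real))"
  shows False
proof -
  obtain t where t: "is_dist (\<lambda>x. P x + t * v x)"
    "c < mutual_info (\<lambda>x. P x + t * v x) W1" "c < mutual_info (\<lambda>x. P x + t * v x) W2"
    using eventually_happens'[OF trivial_limit_at_right_real eventually_conj[OF ev1 ev2]] by blast
  then have "c < min (mutual_info (\<lambda>x. P x + t * v x) W1) (mutual_info (\<lambda>x. P x + t * v x) W2)"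
    by simp
  also have "\<dots> \<le> min (mutual_info P W1) (mutual_info P W2)" using Pmax t(1) by blast
  finally show False using c by (simp add: min_le_iff_disj)
qed

lemma capacity_le_at_maximin:
  assumes ch1: "is_channel W1" and ch2: "is_channel W2"
    and P: "is_dist P" and Ppos: "\<forall>x. 0 < P x"
    and Pmax: "\<forall>Q. is_dist Q \<longrightarrow>
        min (mutual_info Q W1) (mutual_info Q W2) \<le> min (mutual_info P W1) (mutual_info P W2)"
    and lt: "mutual_info P W2 < mutual_info P W1"
  shows "capacity W2 \<le> mutual_info P W2"
proof (rule capacity_le_of_dI_vanishes[OF ch2 P Ppos], intro allI impI)
  fix v :: "'a \<Rightarrow> real" assume v: "(\<Sum>x\<in>UNIV. v x) = 0"
  have no_ascent: "\<not> 0 < dI P W2 w" if w: "(\<Sum>x\<in>UNIV. w x) = 0" for w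
    using maximin_no_common_ascent[OF Pmax _
        eventually_mutual_info_perturb_gt[OF ch1 P Ppos w, of "mutual_info P W2"]
        eventually_mutual_info_perturb_gt[OF ch2 P Ppos w, of "mutual_info P W2"]] lt
    by auto
  have "(\<Sum>x\<in>UNIV. - v x) = 0" using v by (simp add: sum_negf)
  moreover have "dI P W2 (\<lambda>x. - v x) = - dI P W2 v" using dI_lincomb[of P W2 "-1" v 0 v] by simp
  ultimately show "dI P W2 v = 0" using no_ascent[OF v] no_ascent[of "\<lambda>x. - v x"] by linarith
qed

lemma compound_capacity_eq_maximin:
  assumes P: "is_dist P"
    and Pmax: "\<forall>Q. is_dist Q \<longrightarrow>
        min (mutual_info Q W1) (mutual_info Q W2) \<le> min (mutual_info P W1) (mutual_info P W2)"
  shows "compound_capacity W1 W2 = min (mutual_info P W1) (mutual_info P W2)"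
  unfolding compound_capacity_def
proof (rule antisym)
  show "(SUP Q\<in>{Q. is_dist Q}. min (mutual_info Q W1) (mutual_info Q W2))
      \<le> min (mutual_info P W1) (mutual_info P W2)"
    using P Pmax by (intro cSUP_least) auto
  show "min (mutual_info P W1) (mutual_info P W2)
      \<le> (SUP Q\<in>{Q. is_dist Q}. min (mutual_info Q W1) (mutual_info Q W2))"
    using P Pmax by (intro cSUP_upper bdd_aboveI2) auto
qed

subsection \<open>Two functionals without a common ascent direction\<close>

lemma neg_proportional_of_no_common_ascent:
  fixes f g :: "('a::finite \<Rightarrow> real) \<Rightarrow> real"
  assumes lin_f: "\<And>a b v w. f (\<lambda>x. a * v x + b * w x) = a * f v + b * f w"
    and lin_g: "\<And>a b v w. g (\<lambda>x. a * v x + b * w x) = a * g v + b * g w"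
    and no_ascent: "\<And>v. (\<Sum>x\<in>UNIV. v x) = 0 \<Longrightarrow> \<not> (0 < f v \<and> 0 < g v)"
    and u: "(\<Sum>x\<in>UNIV. u x) = 0" "f u = 1"
    and g_nz: "\<exists>w. (\<Sum>x\<in>UNIV. w x) = 0 \<and> g w \<noteq> 0"
  shows "g u < 0" and "\<And>w. (\<Sum>x\<in>UNIV. w x) = 0 \<Longrightarrow> g w = g u * f w"
proof -
  have sum_lincomb: "(\<Sum>x\<in>UNIV. a * v x + b * w x) = a * (\<Sum>x\<in>UNIV. v x) + b * (\<Sum>x\<in>UNIV. w x)"
    for a b :: real and v w :: "'a \<Rightarrow> real"
    by (simp add: sum.distrib sum_distrib_left)
  show gu: "g u < 0"
  proof (rule ccontr)
    assume "\<not> g u < 0"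
    obtain w where w: "(\<Sum>x\<in>UNIV. w x) = 0" "g w \<noteq> 0" using g_nz by blast
    define s where "s = sgn (g w)"
    define z where "z = (\<lambda>x. s * w x + (\<bar>s * f w\<bar> + 1) * u x)"
    have "(\<Sum>x\<in>UNIV. z x) = 0" unfolding z_def sum_lincomb using w u by simp
    moreover have "0 < f z" unfolding z_def lin_f u using abs_ge_minus_self[of "s * f w"] by simp
    moreover have "0 < s * g w" using w by (auto simp: s_def sgn_if)
    then have "0 < g z" unfolding z_def lin_g using \<open>\<not> g u < 0\<close> by (simp add: add_pos_nonneg)
    ultimately show False using no_ascent by blast
  qed
  fix w :: "'a \<Rightarrow> real" assume w: "(\<Sum>x\<in>UNIV. w x) = 0"
  show "g w = g u * f w"
  proof (rule ccontr)
    assume ne: "g w \<noteq> g u * f w"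
    \<comment> \<open>Remove the \<open>u\<close>-component of \<open>w\<close>, then tilt the remainder slightly towards \<open>u\<close>.\<close>
    define \<delta> where "\<delta> = g w - f w * g u"
    define e where "e = \<bar>\<delta>\<bar> / (2 * - g u)"
    define z where "z = (\<lambda>x. sgn \<delta> * (w x - f w * u x) + e * u x)"
    have "\<delta> \<noteq> 0" using ne by (simp add: \<delta>_def algebra_simps)
    have "(\<Sum>x\<in>UNIV. z x) = 0"
      using w u by (simp add: z_def sum.distrib sum_subtractf sum_distrib_left[symmetric])
    moreover have f_z: "f z = e" and g_z: "g z = \<bar>\<delta>\<bar> + e * g u"
      using lin_f[of "sgn \<delta>" "\<lambda>x. w x - f w * u x" e u] lin_f[of 1 w "- f w" u]
        lin_g[of "sgn \<delta>" "\<lambda>x. w x - f w * u x" e u] lin_g[of 1 w "- f w" u] u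
      by (simp_all add: z_def \<delta>_def sgn_mult_self_eq abs_sgn mult.commute flip: abs_sgn)
    moreover have "0 < e" using \<open>\<delta> \<noteq> 0\<close> gu unfolding e_def by (intro divide_pos_pos) auto
    moreover have "e * g u = - \<bar>\<delta>\<bar> / 2" using gu by (simp add: e_def field_simps)
    ultimately show False using no_ascent \<open>\<delta> \<noteq> 0\<close> by force
  qed
qed

lemma unique_weight_of_no_common_ascent:
  fixes f g :: "('a::finite \<Rightarrow> real) \<Rightarrow> real"
  assumes lin_f: "\<And>a b v w. f (\<lambda>x. a * v x + b * w x) = a * f v + b * f w"
    and lin_g: "\<And>a b v w. g (\<lambda>x. a * v x + b * w x) = a * g v + b * g w"
    and no_ascent: "\<And>v. (\<Sum>x\<in>UNIV. v x) = 0 \<Longrightarrow> \<not> (0 < f v \<and> 0 < g v)"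
    and f_nz: "\<exists>u. (\<Sum>x\<in>UNIV. u x) = 0 \<and> f u \<noteq> 0"
    and g_nz: "\<exists>w. (\<Sum>x\<in>UNIV. w x) = 0 \<and> g w \<noteq> 0"
  shows "\<exists>!\<eta>::real. 0 < \<eta> \<and> \<eta> < 1 \<and>
           (\<forall>v. (\<Sum>x\<in>UNIV. v x) = 0 \<longrightarrow> \<eta> * f v + (1 - \<eta>) * g v = 0)"
proof -
  obtain u0 where u0: "(\<Sum>x\<in>UNIV. u0 x) = 0" "f u0 \<noteq> 0" using f_nz by blast
  define u where "u = (\<lambda>x. u0 x / f u0)"
  have u: "(\<Sum>x\<in>UNIV. u x) = 0" "f u = 1"
    using u0 lin_f[of "1 / f u0" u0 0 u0] by (simp_all add: u_def sum_divide_distrib[symmetric])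
  note g_prop = neg_proportional_of_no_common_ascent[OF lin_f lin_g no_ascent u g_nz]
  define \<eta> where "\<eta> = - g u / (1 - g u)"
  show ?thesis
  proof (rule ex1I[of _ \<eta>], intro conjI allI impI)
    show "0 < \<eta>" "\<eta> < 1" using g_prop(1) by (simp_all add: \<eta>_def field_simps)
    fix v :: "'a \<Rightarrow> real" assume "(\<Sum>x\<in>UNIV. v x) = 0"
    then show "\<eta> * f v + (1 - \<eta>) * g v = 0"
      using g_prop(1) g_prop(2)[of v] by (simp add: \<eta>_def field_simps)
  next
    fix \<eta>' assume "0 < \<eta>' \<and> \<eta>' < 1 \<and> (\<forall>v. (\<Sum>x\<in>UNIV. v x) = 0 \<longrightarrow> \<eta>' * f v + (1 - \<eta>') * g v = 0)"
    then have "\<eta>' + (1 - \<eta>') * g u = 0" using u by force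
    then show "\<eta>' = \<eta>" using g_prop(1) by (simp add: \<eta>_def field_simps)
  qed
qed

theorem lemma1:
  fixes W1 W2 :: "'a::finite \<Rightarrow> 'b::finite \<Rightarrow> real"
    and Pstar :: "'a \<Rightarrow> real"
  assumes ch1: "is_channel W1" and ch2: "is_channel W2"
    and Pstar_dist: "is_dist Pstar"
    and Pstar_max: "\<forall>P. is_dist P \<longrightarrow>
        min (mutual_info P W1) (mutual_info P W2) \<le> min (mutual_info Pstar W1) (mutual_info Pstar W2)"
    and Pstar_unique: "\<forall>P. is_dist P \<and> (\<forall>Q. is_dist Q \<longrightarrow>
        min (mutual_info Q W1) (mutual_info Q W2) \<le> min (mutual_info P W1) (mutual_info P W2))
        \<longrightarrow> P = Pstar"
    and Pstar_pos: "\<forall>x. 0 < Pstar x"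
    and V1_pos: "0 < dispersion Pstar W1" and V2_pos: "0 < dispersion Pstar W2"
    and C1_gt: "capacity W1 > compound_capacity W1 W2"
    and C2_gt: "capacity W2 > compound_capacity W1 W2"
  shows "\<exists>!\<eta>::real. 0 < \<eta> \<and> \<eta> < 1 \<and>
           (\<forall>v::'a \<Rightarrow> real. (\<Sum>x\<in>UNIV. v x) = 0 \<longrightarrow>
              \<eta> * dI Pstar W1 v + (1 - \<eta>) * dI Pstar W2 v = 0)"
proof -
  have Pstar_max': "\<forall>P. is_dist P \<longrightarrow>
      min (mutual_info P W2) (mutual_info P W1) \<le> min (mutual_info Pstar W2) (mutual_info Pstar W1)"
    using Pstar_max by (simp add: min.commute)
  note C = compound_capacity_eq_maximin[OF Pstar_dist Pstar_max]
  have I_eq: "mutual_info Pstar W1 = mutual_info Pstar W2"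
    using capacity_le_at_maximin[OF ch1 ch2 Pstar_dist Pstar_pos Pstar_max]
      capacity_le_at_maximin[OF ch2 ch1 Pstar_dist Pstar_pos Pstar_max'] C1_gt C2_gt C
    by linarith
  have no_ascent: "\<not> (0 < dI Pstar W1 v \<and> 0 < dI Pstar W2 v)" if "(\<Sum>x\<in>UNIV. v x) = 0" for v
    using maximin_no_common_ascent[OF Pstar_max order_refl]
      eventually_mutual_info_perturb_gt[OF ch1 Pstar_dist Pstar_pos that]
      eventually_mutual_info_perturb_gt[OF ch2 Pstar_dist Pstar_pos that] I_eq
    by auto
  have "\<exists>u. (\<Sum>x\<in>UNIV. u x) = 0 \<and> dI Pstar W1 u \<noteq> 0"
    using capacity_le_of_dI_vanishes[OF ch1 Pstar_dist Pstar_pos] C1_gt C I_eq by force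
  moreover have "\<exists>u. (\<Sum>x\<in>UNIV. u x) = 0 \<and> dI Pstar W2 u \<noteq> 0"
    using capacity_le_of_dI_vanishes[OF ch2 Pstar_dist Pstar_pos] C2_gt C I_eq by force
  ultimately show ?thesis
    by (intro unique_weight_of_no_common_ascent[of "dI Pstar W1" "dI Pstar W2"] dI_lincomb no_ascent)
qed

end
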